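(* Let $G$ be an $\alpha_i$-metric graph ($i\ge 0$ an integer) and let $x,y$ be a pair of mutually distant vertices of $G$. Then $d(x,y)\ge 2rad(G)-4i-3$ and $d(x,y)\ge diam(G)-3i-2$. Furthermore, any middle vertex $z$ of a shortest path between $x$ and $y$ satisfies $e(z)\le\lceil d(x,y)/2\rceil+2i+1$.
   Context: All graphs are finite, connected, unweighted, undirected, simple; $d(u,v)$ is the shortest-path distance. $I(u,v)=\{x: d(u,x)+d(x,v)=d(u,v)\}$. A graph is $\alpha_i$-metric if for all vertices $u,v,w,x$: whenever $v\in I(u,w)$, $w\in I(v,x)$ and $v,w$ are adjacent, then $d(u,x)\ge d(u,v)+d(v,x)-i$. $e(v)=\max_u d(u,v)$, $rad(G)=\min_v e(v)$, $diam(G)=\max_v e(v)$. Vertices $x,y$ are mutually distant if $e(x)=e(y)=d(x,y)$. A middle vertex of a shortest $(x,y)$-path is a vertex $z$ on it with $\{d(x,z),d(y,z)\}=\{\lfloor d(x,y)/2\rfloor,\lceil d(x,y)/2\rceil\}$. *)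

theory Defs
  imports Main
begin

definition graph :: "'a set \<Rightarrow> ('a \<Rightarrow> 'a \<Rightarrow> bool) \<Rightarrow> bool" where
  "graph V E \<longleftrightarrow> finite V \<and> V \<noteq> {} \<and>
     (\<forall>u v. E u v \<longrightarrow> u \<in> V \<and> v \<in> V) \<and>
     (\<forall>u v. E u v \<longrightarrow> E v u) \<and> (\<forall>u. \<not> E u u)"

definition walk :: "'a set \<Rightarrow> ('a \<Rightarrow> 'a \<Rightarrow> bool) \<Rightarrow> 'a list \<Rightarrow> bool" where
  "walk V E p \<longleftrightarrow> p \<noteq> [] \<and> set p \<subseteq> V \<and>
     (\<forall>k. Suc k < length p \<longrightarrow> E (p ! k) (p ! Suc k))"

definition walk_betw :: "'a set \<Rightarrow> ('a \<Rightarrow> 'a \<Rightarrow> bool) \<Rightarrow> 'a \<Rightarrow> 'a list \<Rightarrow> 'a \<Rightarrow> bool" where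
  "walk_betw V E u p v \<longleftrightarrow> walk V E p \<and> hd p = u \<and> last p = v"

definition connected_graph :: "'a set \<Rightarrow> ('a \<Rightarrow> 'a \<Rightarrow> bool) \<Rightarrow> bool" where
  "connected_graph V E \<longleftrightarrow> graph V E \<and> (\<forall>u\<in>V. \<forall>v\<in>V. \<exists>p. walk_betw V E u p v)"

definition dist :: "'a set \<Rightarrow> ('a \<Rightarrow> 'a \<Rightarrow> bool) \<Rightarrow> 'a \<Rightarrow> 'a \<Rightarrow> nat" where
  "dist V E u v = (LEAST n. \<exists>p. walk_betw V E u p v \<and> length p = Suc n)"

definition interval :: "'a set \<Rightarrow> ('a \<Rightarrow> 'a \<Rightarrow> bool) \<Rightarrow> 'a \<Rightarrow> 'a \<Rightarrow> 'a set" where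
  "interval V E u v = {x \<in> V. dist V E u x + dist V E x v = dist V E u v}"

definition alpha_metric :: "nat \<Rightarrow> 'a set \<Rightarrow> ('a \<Rightarrow> 'a \<Rightarrow> bool) \<Rightarrow> bool" where
  "alpha_metric i V E \<longleftrightarrow>
     (\<forall>u\<in>V. \<forall>v\<in>V. \<forall>w\<in>V. \<forall>x\<in>V.
        v \<in> interval V E u w \<and> w \<in> interval V E v x \<and> E v w \<longrightarrow>
        int (dist V E u x) \<ge> int (dist V E u v) + int (dist V E v x) - int i)"

definition ecc :: "'a set \<Rightarrow> ('a \<Rightarrow> 'a \<Rightarrow> bool) \<Rightarrow> 'a \<Rightarrow> nat" where
  "ecc V E v = Max ((\<lambda>u. dist V E u v) ` V)"

definition rad :: "'a set \<Rightarrow> ('a \<Rightarrow> 'a \<Rightarrow> bool) \<Rightarrow> nat" where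
  "rad V E = Min (ecc V E ` V)"

definition diam :: "'a set \<Rightarrow> ('a \<Rightarrow> 'a \<Rightarrow> bool) \<Rightarrow> nat" where
  "diam V E = Max (ecc V E ` V)"

definition mutually_distant :: "'a set \<Rightarrow> ('a \<Rightarrow> 'a \<Rightarrow> bool) \<Rightarrow> 'a \<Rightarrow> 'a \<Rightarrow> bool" where
  "mutually_distant V E x y \<longleftrightarrow>
     ecc V E x = dist V E x y \<and> ecc V E y = dist V E x y"

definition shortest_path :: "'a set \<Rightarrow> ('a \<Rightarrow> 'a \<Rightarrow> bool) \<Rightarrow> 'a \<Rightarrow> 'a list \<Rightarrow> 'a \<Rightarrow> bool" where
  "shortest_path V E x p y \<longleftrightarrow> walk_betw V E x p y \<and> length p = Suc (dist V E x y)"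

definition middle_vertex :: "'a set \<Rightarrow> ('a \<Rightarrow> 'a \<Rightarrow> bool) \<Rightarrow> 'a \<Rightarrow> 'a list \<Rightarrow> 'a \<Rightarrow> 'a \<Rightarrow> bool" where
  "middle_vertex V E x p y z \<longleftrightarrow> z \<in> set p \<and>
     {dist V E x z, dist V E y z} = {dist V E x y div 2, (dist V E x y + 1) div 2}"

end

theory Submission
  imports Defs
begin

(* In an alpha_i-metric graph the levels {c \<in> I(x,y). d(x,c) = s} of an interval have
   diameter at most i + 1: if two vertices of a level are at distance at least i + 2, the
   alpha_i condition forces their neighbours one level closer to x to be at least as far
   apart, which is absurd once level 0 = {x} is reached.
   If x and y are mutually distant, every vertex v is within max(s, d(x,y) - s) + i of
   level s: a vertex c of the level nearest to v cannot step towards v inside the level,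
   so that step leaves I(x,y) away from x or away from y, and the alpha_i condition bounds
   d(c,v) by d(x,v) - s + i or d(y,v) - (d(x,y) - s) + i, both at most max(s, d(x,y) - s) + i.
   For a middle vertex z the two facts together give e(z) <= ceil(d(x,y)/2) + 2i + 1,
   which bounds rad, and joining two arbitrary vertices through the middle level bounds
   diam. *)

lemma walk_iff_successively: "walk V E p \<longleftrightarrow> p \<noteq> [] \<and> set p \<subseteq> V \<and> successively E p"
  by (simp add: walk_def successively_conv_nth)

lemma dist_le_walk_length:
  assumes "walk_betw V E u p v" shows "dist V E u v \<le> length p - 1"
proof -
  have "length p = Suc (length p - 1)"
    using assms by (simp add: walk_betw_def walk_iff_successively)
  with assms show ?thesis
    unfolding dist_def by (metis (mono_tags, lifting) Least_le)
qed

locale connected_simple_graph =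
  fixes V :: "'a set" and E :: "'a \<Rightarrow> 'a \<Rightarrow> bool"
  assumes connected: "connected_graph V E"
begin

abbreviation d :: "'a \<Rightarrow> 'a \<Rightarrow> nat" where "d \<equiv> dist V E"

lemma finite_vertices: "finite V" and vertices_nonempty: "V \<noteq> {}"
  and edge_vertices: "E u v \<Longrightarrow> u \<in> V \<and> v \<in> V"
  and edge_sym: "E u v \<Longrightarrow> E v u" and edge_irrefl: "\<not> E u u"
  using connected unfolding connected_graph_def graph_def by auto

lemma shortest_walk_exists:
  assumes "u \<in> V" "v \<in> V"
  shows "\<exists>p. walk_betw V E u p v \<and> length p = Suc (d u v)"
proof -
  obtain p where p: "walk_betw V E u p v"
    using connected assms unfolding connected_graph_def by blast
  then have "length p = Suc (length p - 1)"
    by (simp add: walk_betw_def walk_iff_successively)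
  with p have "\<exists>n p. walk_betw V E u p v \<and> length p = Suc n" by blast
  then show ?thesis unfolding dist_def by (rule LeastI_ex)
qed

lemma dist_triangle:
  assumes "u \<in> V" "v \<in> V" "w \<in> V"
  shows "d u v \<le> d u w + d w v"
proof -
  obtain p where p: "walk_betw V E u p w" "length p = Suc (d u w)"
    using shortest_walk_exists assms by blast
  obtain q where q: "walk_betw V E w q v" "length q = Suc (d w v)"
    using shortest_walk_exists assms by blast
  obtain q' where q': "q = w # q'"
    using q by (cases q) (auto simp: walk_betw_def)
  have "walk_betw V E u (p @ q') v"
    using p q q' by (cases q') (auto simp: walk_betw_def walk_iff_successively successively_append_iff)
  then show ?thesis
    using dist_le_walk_length p q q' by fastforce
qed

lemma dist_commute:
  assumes "u \<in> V" "v \<in> V" shows "d u v = d v u"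
proof -
  have "d v u \<le> d u v" if uv: "u \<in> V" "v \<in> V" for u v
  proof -
    obtain p where p: "walk_betw V E u p v" "length p = Suc (d u v)"
      using shortest_walk_exists uv by blast
    then have "walk_betw V E v (rev p) u"
      using edge_sym by (auto simp: walk_betw_def walk_iff_successively hd_rev last_rev
          intro: successively_mono)
    then show ?thesis using dist_le_walk_length p by fastforce
  qed
  with assms show ?thesis by (simp add: antisym)
qed

lemma dist_self: "u \<in> V \<Longrightarrow> d u u = 0"
  using dist_le_walk_length[of V E u "[u]" u] by (simp add: walk_betw_def walk_iff_successively)

lemma dist_eq_0_iff:
  assumes "u \<in> V" "v \<in> V" shows "d u v = 0 \<longleftrightarrow> u = v"
proof
  assume "d u v = 0"
  then obtain p where "walk_betw V E u p v" "length p = Suc 0"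
    using shortest_walk_exists assms by fastforce
  then show "u = v" by (auto simp: walk_betw_def length_Suc_conv)
qed (use dist_self assms in simp)

lemma dist_edge: assumes "E u v" shows "d u v = 1"
proof -
  have "walk_betw V E u [u, v] v"
    using assms edge_vertices by (simp add: walk_betw_def walk_iff_successively)
  then have "d u v \<le> 1" using dist_le_walk_length by fastforce
  moreover have "d u v \<noteq> 0"
    using assms edge_irrefl edge_vertices dist_eq_0_iff by metis
  ultimately show ?thesis by simp
qed

lemma dist_edge_le_right:
  assumes "E v w" "u \<in> V" shows "d u w \<le> d u v + 1"
  using dist_triangle[of u w v] dist_edge assms edge_vertices by fastforce

lemma dist_edge_le_left:
  assumes "E v w" "u \<in> V" shows "d w u \<le> d v u + 1"
  using dist_edge_le_right dist_commute assms edge_vertices by metis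

lemma neighbour_closer_exists:
  assumes "u \<in> V" "v \<in> V" "u \<noteq> v"
  shows "\<exists>w. E u w \<and> d w v + 1 = d u v"
proof -
  obtain p where p: "walk_betw V E u p v" "length p = Suc (d u v)"
    using shortest_walk_exists assms by blast
  have "d u v \<noteq> 0" using dist_eq_0_iff assms by blast
  then obtain w r where pr: "p = u # w # r"
    using p unfolding walk_betw_def by (cases p; cases "tl p") auto
  then have "E u w" "walk_betw V E w (w # r) v"
    using p by (auto simp: walk_betw_def walk_iff_successively)
  then have "d w v \<le> d u v - 1"
    using dist_le_walk_length p pr by fastforce
  moreover have "d u v \<le> d w v + 1"
    using dist_edge_le_left \<open>E u w\<close> edge_sym assms by blast
  ultimately show ?thesis using \<open>E u w\<close> \<open>d u v \<noteq> 0\<close> by auto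
qed

lemma interval_level_exists:
  assumes "u \<in> V" "v \<in> V" "k \<le> d u v"
  shows "\<exists>z \<in> interval V E u v. d u z = k"
  using assms(3)
proof (induction k)
  case 0 then show ?case
    using assms dist_self by (auto simp: interval_def)
next
  case (Suc k)
  then obtain z where z: "z \<in> interval V E u v" "d u z = k" by auto
  then have zV: "z \<in> V" and "z \<noteq> v"
    using Suc.prems by (auto simp: interval_def)
  then obtain w where w: "E z w" "d w v + 1 = d z v"
    using neighbour_closer_exists assms by blast
  have "d u w \<le> k + 1" "d u v \<le> d u w + d w v"
    using dist_edge_le_right[OF w(1)] dist_triangle[of u v w] edge_vertices w assms z by auto
  then show ?case
    using w z edge_vertices by (intro bexI[of _ w]) (auto simp: interval_def)
qed

lemma ecc_ge: "u \<in> V \<Longrightarrow> d u v \<le> ecc V E v"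
  unfolding ecc_def using finite_vertices by (intro Max_ge) auto

lemma ecc_le: "(\<And>u. u \<in> V \<Longrightarrow> d u v \<le> B) \<Longrightarrow> ecc V E v \<le> B"
  unfolding ecc_def using finite_vertices vertices_nonempty by (subst Max_le_iff) auto

lemma rad_le_ecc: "v \<in> V \<Longrightarrow> rad V E \<le> ecc V E v"
  unfolding rad_def using finite_vertices by (intro Min_le) auto

lemma diam_attained: "\<exists>u\<in>V. \<exists>w\<in>V. diam V E = d w u"
proof -
  obtain u where "u \<in> V" "diam V E = ecc V E u"
    unfolding diam_def using Max_in finite_vertices vertices_nonempty
    by (metis (no_types, lifting) finite_imageI image_iff image_is_empty)
  moreover obtain w where "w \<in> V" "ecc V E u = d w u"
    unfolding ecc_def using Max_in finite_vertices vertices_nonempty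
    by (metis (no_types, lifting) finite_imageI image_iff image_is_empty)
  ultimately show ?thesis by auto
qed

lemma middle_vertex_in_interval:
  assumes "shortest_path V E x p y" "middle_vertex V E x p y z"
    and "y \<in> V"
  shows "z \<in> interval V E x y"
    and "max (d x z) (d x y - d x z) = (d x y + 1) div 2"
proof -
  have zV: "z \<in> V" using assms(1,2)
    by (auto simp: shortest_path_def walk_betw_def walk_def middle_vertex_def)
  then have "{d x z, d z y} = {d x y div 2, (d x y + 1) div 2}"
    using assms(2,3) dist_commute by (simp add: middle_vertex_def)
  then have "d x z + d z y = d x y \<and>
      max (d x z) (d x y - d x z) = (d x y + 1) div 2"
    by (auto simp: doubleton_eq_iff)
  with zV show "z \<in> interval V E x y"
    and "max (d x z) (d x y - d x z) = (d x y + 1) div 2"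
    by (simp_all add: interval_def)
qed

end

locale alpha_metric_graph = connected_simple_graph +
  fixes i :: nat
  assumes alpha: "alpha_metric i V E"
begin

lemma alpha_metricD:
  assumes "u \<in> V" "x \<in> V" "E v w"
    and "d u w = d u v + 1" "d v x = d w x + 1"
  shows "d u v + d v x \<le> d u x + i"
proof -
  have "v \<in> interval V E u w" "w \<in> interval V E v x"
    using assms dist_edge[OF assms(3)] edge_vertices by (auto simp: interval_def)
  then have "int (d u x) \<ge> int (d u v) + int (d v x) - int i"
    using alpha assms edge_vertices unfolding alpha_metric_def by blast
  then show ?thesis by linarith
qed

lemma interval_step_towards_start:
  assumes "x \<in> V" "y \<in> V" "a \<in> interval V E x y" "a \<noteq> x"
  shows "\<exists>a'. E a a' \<and> a' \<in> interval V E x y \<and> d x a' + 1 = d x a"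
proof -
  have aV: "a \<in> V" using assms by (simp add: interval_def)
  then obtain a' where a': "E a a'" "d a' x + 1 = d a x"
    using neighbour_closer_exists assms by blast
  have a'V: "a' \<in> V" using a' edge_vertices by blast
  have "d x a' + 1 = d x a" using a' aV a'V assms dist_commute by metis
  moreover have "d a' y \<le> d a y + 1"
    using dist_edge_le_left[OF a'(1) assms(2)] .
  moreover have "d x y \<le> d x a' + d a' y"
    using dist_triangle[OF assms(1,2) a'V] .
  ultimately show ?thesis using a' a'V assms by (auto simp: interval_def)
qed

theorem interval_levels_thin:
  assumes "x \<in> V" "y \<in> V"
  shows "a \<in> interval V E x y \<Longrightarrow> b \<in> interval V E x y \<Longrightarrow> d x a = s \<Longrightarrow> d x b = s \<Longrightarrow>
    d a b \<le> i + 1"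
proof (induction s arbitrary: a b)
  case 0
  then have "a = x" "b = x"
    using dist_eq_0_iff[OF assms(1)] by (auto simp: interval_def)
  then show ?case using dist_self assms by simp
next
  case (Suc s)
  obtain a' where a': "E a a'" "a' \<in> interval V E x y" "d x a' = s"
    using interval_step_towards_start[OF assms Suc.prems(1)] Suc.prems(3) assms(1) dist_self
    by force
  obtain b' where b': "E b b'" "b' \<in> interval V E x y" "d x b' = s"
    using interval_step_towards_start[OF assms Suc.prems(2)] Suc.prems(4) assms(1) dist_self
    by force
  have V: "a \<in> V" "b \<in> V" "a' \<in> V" "b' \<in> V"
    using Suc.prems a' b' by (auto simp: interval_def)
  have on_interval: "d x a + d a y = d x y" "d x b + d b y = d x y"
      "d x a' + d a' y = d x y" "d x b' + d b' y = d x y"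
    using Suc.prems a' b' by (auto simp: interval_def)
  note comm = dist_commute[OF assms(1) V(1)] dist_commute[OF assms(1) V(2)]
    dist_commute[OF assms(1) V(3)] dist_commute[OF assms(2) V(1)]
    dist_commute[OF assms(2) V(2)] dist_commute[OF assms(2) V(3)]
    dist_commute[OF V(1) V(2)] dist_commute[OF V(2) V(3)]
  show ?case
  proof (rule ccontr)
    assume far: "\<not> d a b \<le> i + 1"
    have "d a' b = d a b"
    proof -
      have "\<not> d b a' = d b a + 1"
      proof
        assume "d b a' = d b a + 1"
        then have "d b a + d a x \<le> d b x + i"
          using alpha_metricD[of b x a a'] a' Suc.prems V assms comm by simp
        then show False using far Suc.prems comm by simp
      qed
      moreover have "\<not> d a b = d a' b + 1"
      proof
        assume "d a b = d a' b + 1"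
        then have "d y a + d a b \<le> d y b + i"
          using alpha_metricD[of y b a a'] a' Suc.prems V assms comm on_interval by simp
        then show False using far Suc.prems comm on_interval by simp
      qed
      moreover have "d a' b \<le> d a b + 1" "d a b \<le> d a' b + 1"
        using dist_edge_le_left a'(1) edge_sym V by blast+
      ultimately show ?thesis using comm by linarith
    qed
    moreover have "d a' b' \<le> i + 1"
      using Suc.IH a' b' by blast
    moreover have "d a' b \<le> d a' b' + 1"
      using dist_edge_le_right b'(1) edge_sym V by blast
    ultimately have "d a' b = d a' b' + 1" using far by linarith
    then have "d a' b' + d b' y \<le> d a' y + i"
      using alpha_metricD[of a' y b' b] b' edge_sym V assms on_interval Suc.prems by simp
    then show False
      using far \<open>d a' b = d a b\<close> \<open>d a' b = d a' b' + 1\<close> on_interval a'(3) b'(3) by linarith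
  qed
qed

lemma mutually_distant_dist_le:
  assumes "mutually_distant V E x y" "x \<in> V" "y \<in> V" "v \<in> V"
  shows "d x v \<le> d x y" "d y v \<le> d x y"
  using ecc_ge[OF assms(4), of x] ecc_ge[OF assms(4), of y] assms
    dist_commute[OF assms(2,4)] dist_commute[OF assms(3,4)]
  unfolding mutually_distant_def by simp_all

lemma interval_level_near:
  assumes md: "mutually_distant V E x y" and xy: "x \<in> V" "y \<in> V"
    and "s \<le> d x y" and vV: "v \<in> V"
  shows "\<exists>c \<in> interval V E x y. d x c = s \<and> d c v \<le> max s (d x y - s) + i"
proof -
  let ?L = "{c \<in> interval V E x y. d x c = s}"
  obtain c0 where "c0 \<in> ?L" using interval_level_exists xy assms(4) by blast
  then obtain c where c: "c \<in> ?L" and c_min: "\<And>c'. c' \<in> ?L \<Longrightarrow> d c v \<le> d c' v"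
    using ex_has_least_nat[of "\<lambda>c. c \<in> ?L" c0 "\<lambda>c. d c v"] by blast
  have cV: "c \<in> V" and c_on: "d x c + d c y = d x y" "d x c = s"
    using c by (auto simp: interval_def)
  have "d c v \<le> max s (d x y - s) + i"
  proof (cases "c = v")
    case True then show ?thesis using dist_self cV by simp
  next
    case False
    then obtain w where w: "E c w" "d w v + 1 = d c v"
      using neighbour_closer_exists cV vV by blast
    have wV: "w \<in> V" using w edge_vertices by blast
    have "w \<notin> ?L"
    proof
      assume "w \<in> ?L"
      then have "d c v \<le> d w v" by (rule c_min)
      with w show False by simp
    qed
    then have "\<not> (d x w = d x c \<and> d w y = d c y)"
      using wV c_on by (auto simp: interval_def)
    moreover have "d x w \<le> d x c + 1" "d w y \<le> d c y + 1" "d x y \<le> d x w + d w y"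
      using dist_edge_le_right[OF w(1) xy(1)] dist_edge_le_left[OF w(1) xy(2)] dist_triangle[OF xy wV] .
    ultimately consider "d x w = d x c + 1" | "d w y = d c y + 1"
      using c_on by linarith
    then show ?thesis
    proof cases
      case 1
      then have "d x c + d c v \<le> d x v + i"
        using alpha_metricD[OF xy(1) vV w(1)] w(2) by simp
      then show ?thesis using mutually_distant_dist_le[OF md xy vV] c_on by linarith
    next
      case 2
      then have "d y w = d y c + 1"
        using dist_commute[OF xy(2) wV] dist_commute[OF xy(2) cV] by simp
      then have "d y c + d c v \<le> d y v + i"
        using alpha_metricD[OF xy(2) vV w(1)] w(2) by simp
      then show ?thesis
        using mutually_distant_dist_le[OF md xy vV] c_on dist_commute[OF xy(2) cV] by linarith
    qed
  qed
  then show ?thesis using c by blast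
qed

lemma ecc_interval_le:
  assumes md: "mutually_distant V E x y" and xy: "x \<in> V" "y \<in> V"
    and z: "z \<in> interval V E x y"
  shows "ecc V E z \<le> max (d x z) (d x y - d x z) + 2 * i + 1"
proof (rule ecc_le)
  fix v assume vV: "v \<in> V"
  have zV: "z \<in> V" and "d x z \<le> d x y" using z by (auto simp: interval_def)
  then obtain c where c: "c \<in> interval V E x y" "d x c = d x z"
      and cv: "d c v \<le> max (d x z) (d x y - d x z) + i"
    using interval_level_near[OF md xy] vV by blast
  have cV: "c \<in> V" using c by (simp add: interval_def)
  have "d c z \<le> i + 1" using interval_levels_thin[OF xy c(1) z c(2)] by simp
  moreover have "d v z \<le> d v c + d c z" using dist_triangle[OF vV zV cV] .
  ultimately show "d v z \<le> max (d x z) (d x y - d x z) + 2 * i + 1"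
    using cv dist_commute[OF vV cV] by linarith
qed

lemma dist_le_of_mutually_distant:
  assumes md: "mutually_distant V E x y" and xy: "x \<in> V" "y \<in> V"
    and uw: "u \<in> V" "w \<in> V"
  shows "d u w \<le> 2 * ((d x y + 1) div 2) + 3 * i + 1"
proof -
  define s where "s = d x y div 2"
  have "s \<le> d x y" and max_s: "max s (d x y - s) = (d x y + 1) div 2"
    unfolding s_def by auto
  obtain cu where cu: "cu \<in> interval V E x y" "d x cu = s" "d cu u \<le> max s (d x y - s) + i"
    using interval_level_near[OF md xy \<open>s \<le> d x y\<close> uw(1)] by blast
  obtain cw where cw: "cw \<in> interval V E x y" "d x cw = s" "d cw w \<le> max s (d x y - s) + i"
    using interval_level_near[OF md xy \<open>s \<le> d x y\<close> uw(2)] by blast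
  have V: "cu \<in> V" "cw \<in> V" using cu cw by (auto simp: interval_def)
  have "d cu cw \<le> i + 1" using interval_levels_thin[OF xy cu(1) cw(1) cu(2) cw(2)] .
  moreover have "d u w \<le> d u cu + d cu w" "d cu w \<le> d cu cw + d cw w"
    using dist_triangle[OF uw V(1)] dist_triangle[OF V(1) uw(2) V(2)] .
  ultimately show ?thesis
    using cu(3) cw(3) max_s dist_commute[OF uw(1) V(1)] by linarith
qed

end

theorem lemma6:
  fixes V :: "'a set" and E :: "'a \<Rightarrow> 'a \<Rightarrow> bool" and i :: nat and x y :: 'a
  assumes "connected_graph V E"
    and "alpha_metric i V E"
    and "x \<in> V" and "y \<in> V"
    and "mutually_distant V E x y"
  shows "int (dist V E x y) \<ge> 2 * int (rad V E) - 4 * int i - 3 \<and>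
         int (dist V E x y) \<ge> int (diam V E) - 3 * int i - 2 \<and>
         (\<forall>p z. shortest_path V E x p y \<and> middle_vertex V E x p y z \<longrightarrow>
           ecc V E z \<le> (dist V E x y + 1) div 2 + 2 * i + 1)"
proof -
  interpret alpha_metric_graph V E i
    using assms(1,2) by unfold_locales
  let ?D = "dist V E x y"
  note ecc_bound = ecc_interval_le[OF assms(5,3,4)]
  obtain z0 where z0: "z0 \<in> interval V E x y" "d x z0 = ?D div 2"
    using interval_level_exists[OF assms(3,4), of "?D div 2"] by auto
  have "rad V E \<le> ecc V E z0"
    using rad_le_ecc z0(1) by (simp add: interval_def)
  also have "\<dots> \<le> (?D + 1) div 2 + 2 * i + 1"
    using ecc_bound[OF z0(1)] z0(2) by simp
  finally have rad: "rad V E \<le> (?D + 1) div 2 + 2 * i + 1" .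
  obtain u w where "u \<in> V" "w \<in> V" "diam V E = d w u"
    using diam_attained by blast
  then have diam: "diam V E \<le> 2 * ((?D + 1) div 2) + 3 * i + 1"
    using dist_le_of_mutually_distant[OF assms(5,3,4)] by simp
  have "ecc V E z \<le> (?D + 1) div 2 + 2 * i + 1"
    if "shortest_path V E x p y" "middle_vertex V E x p y z" for p z
    using ecc_bound[OF middle_vertex_in_interval(1)[OF that assms(4)]]
      middle_vertex_in_interval(2)[OF that assms(4)] by simp
  moreover have "2 * ((?D + 1) div 2) \<le> ?D + 1" by simp
  ultimately show ?thesis using rad diam by auto
qed

end
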